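(* For every measurement assemblage $\vec B$ on $\mathcal H$, $$\mathbb{IR}^{\rm R}(\vec B)=\max_{\rho_B}\mathbb{SR}^{\rm R}\big(\rho_B^{1/2}\vec B\rho_B^{1/2}\big),$$ where the maximum is over density operators $\rho_B$ on $\mathcal H$. Moreover, every full-rank density operator $\rho_B$ attains the maximum.
   Context: All Hilbert spaces are finite-dimensional. A measurement assemblage (MA) on $\mathcal H$ is a family $\vec M=\{M_{a|x}\}_{a,x}$, with $x$ ranging over a finite input set and $a$ over a finite outcome set $\mathcal A$ of cardinality $|\mathcal A|$, such that for each $x$, $\{M_{a|x}\}_a$ is a POVM. $\vec M$ is jointly measurable, written $\vec M\in\mathbb{JM}$, if there exist a finite POVM $\{G_\lambda\}_\lambda$ and conditional probability distributions $p(a|x,\lambda)$ with $M_{a|x}=\sum_\lambda p(a|x,\lambda)G_\lambda$ for all $a,x$. A state assemblage (SA) on $\mathcal H$ is a family $\vec\sigma=\{\sigma_{a|x}\}_{a,x}$ of positive semidefinite operators such that $\sum_a\sigma_{a|x}=\rho$ is independent of $x$ and $\mathrm{tr}\rho=1$; $\rho$ is called its reduced state. $\vec\sigma$ admits a local hidden state model, written $\vec\sigma\in\mathbb{LHS}$, if $\sigma_{a|x}=\sum_\lambda p(\lambda)p(a|x,\lambda)\rho_\lambda$ for some finite probability distribution $p(\lambda)$, conditional distributions $p(a|x,\lambda)$ and density operators $\rho_\lambda$. Random incompatibility robustness: $\mathbb{IR}^{\rm R}(\vec M)=\min\{t\ge0:\exists\ \vec D\in\mathbb{JM}$ with $(M_{a|x}+t\mathbb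 1/|\mathcal A|)/(1+t)=D_{a|x}\ \forall a,x\}$. Random steering robustness of an SA $\vec\sigma$ with reduced state $\rho$: $\mathbb{SR}^{\rm R}(\vec\sigma)=\min\{t\ge0:\exists\ \vec\tau\in\mathbb{LHS}$ with $(\sigma_{a|x}+t\rho/|\mathcal A|)/(1+t)=\tau_{a|x}\ \forall a,x\}$. For a density operator $\rho$ and an MA $\vec B$, $\rho^{1/2}\vec B\rho^{1/2}$ denotes the SA $\{\rho^{1/2}B_{a|x}\rho^{1/2}\}_{a,x}$, with reduced state $\rho$. *)

theory Defs
  imports "HOL-Analysis.Analysis"
begin

text \<open>Hilbert space H = complex^'n ('n a finite type, dim = CARD('n)).  Outcomes range over a finite
  type 'a, inputs over a finite type 'x.\<close>

type_synonym 'n op = "complex^'n^'n"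

definition psd :: "'n::finite op \<Rightarrow> bool" where
  "psd A \<longleftrightarrow> (\<forall>v::complex^'n.
      Im (\<Sum>i\<in>UNIV. cnj (v$i) * (A *v v)$i) = 0 \<and>
      Re (\<Sum>i\<in>UNIV. cnj (v$i) * (A *v v)$i) \<ge> 0)"

definition density_op :: "'n::finite op \<Rightarrow> bool" where
  "density_op \<rho> \<longleftrightarrow> psd \<rho> \<and> trace \<rho> = 1"

definition op_sqrt :: "'n::finite op \<Rightarrow> 'n op" where
  "op_sqrt A = (THE X. psd X \<and> X ** X = A)"

definition povm :: "('l \<Rightarrow> 'n::finite op) \<Rightarrow> 'l set \<Rightarrow> bool" where
  "povm G L \<longleftrightarrow> (\<forall>l\<in>L. psd (G l)) \<and> (\<Sum>l\<in>L. G l) = mat 1"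

text \<open>Measurement assemblage: M a x = M_{a|x}.\<close>
definition MA :: "('a::finite \<Rightarrow> 'x::finite \<Rightarrow> 'n::finite op) \<Rightarrow> bool" where
  "MA M \<longleftrightarrow> (\<forall>x. povm (\<lambda>a. M a x) UNIV)"

definition JM :: "('a::finite \<Rightarrow> 'x::finite \<Rightarrow> 'n::finite op) \<Rightarrow> bool" where
  "JM M \<longleftrightarrow> (\<exists>(L::nat set) (G::nat \<Rightarrow> 'n op) (p::'a \<Rightarrow> 'x \<Rightarrow> nat \<Rightarrow> real).
      finite L \<and> povm G L \<and>
      (\<forall>a x l. l \<in> L \<longrightarrow> p a x l \<ge> 0) \<and>
      (\<forall>x l. l \<in> L \<longrightarrow> (\<Sum>a\<in>UNIV. p a x l) = 1) \<and>
      (\<forall>a x. M a x = (\<Sum>l\<in>L. p a x l *\<^sub>R G l)))"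

definition SA :: "('a::finite \<Rightarrow> 'x::finite \<Rightarrow> 'n::finite op) \<Rightarrow> bool" where
  "SA \<sigma> \<longleftrightarrow> (\<forall>a x. psd (\<sigma> a x)) \<and>
     (\<exists>\<rho>. trace \<rho> = 1 \<and> (\<forall>x. (\<Sum>a\<in>UNIV. \<sigma> a x) = \<rho>))"

definition reduced_state :: "('a::finite \<Rightarrow> 'x::finite \<Rightarrow> 'n::finite op) \<Rightarrow> 'n op" where
  "reduced_state \<sigma> = (THE \<rho>. \<forall>x. (\<Sum>a\<in>UNIV. \<sigma> a x) = \<rho>)"

definition LHS :: "('a::finite \<Rightarrow> 'x::finite \<Rightarrow> 'n::finite op) \<Rightarrow> bool" where
  "LHS \<sigma> \<longleftrightarrow> (\<exists>(L::nat set) (q::nat \<Rightarrow> real) (p::'a \<Rightarrow> 'x \<Rightarrow> nat \<Rightarrow> real) (r::nat \<Rightarrow> 'n op).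
      finite L \<and> (\<forall>l\<in>L. q l \<ge> 0) \<and> (\<Sum>l\<in>L. q l) = 1 \<and>
      (\<forall>a x l. l \<in> L \<longrightarrow> p a x l \<ge> 0) \<and>
      (\<forall>x l. l \<in> L \<longrightarrow> (\<Sum>a\<in>UNIV. p a x l) = 1) \<and>
      (\<forall>l\<in>L. density_op (r l)) \<and>
      (\<forall>a x. \<sigma> a x = (\<Sum>l\<in>L. (q l * p a x l) *\<^sub>R r l)))"

text \<open>Random incompatibility robustness (the minimum is rendered as Inf).\<close>
definition IR_R :: "('a::finite \<Rightarrow> 'x::finite \<Rightarrow> 'n::finite op) \<Rightarrow> real" where
  "IR_R M = Inf {t. t \<ge> 0 \<and> (\<exists>D. JM D \<and>
      (\<forall>a x. (1 / (1 + t)) *\<^sub>R (M a x + (t / real CARD('a)) *\<^sub>R mat 1) = D a x))}"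

definition SR_R :: "('a::finite \<Rightarrow> 'x::finite \<Rightarrow> 'n::finite op) \<Rightarrow> real" where
  "SR_R \<sigma> = Inf {t. t \<ge> 0 \<and> (\<exists>\<tau>. LHS \<tau> \<and>
      (\<forall>a x. (1 / (1 + t)) *\<^sub>R (\<sigma> a x + (t / real CARD('a)) *\<^sub>R reduced_state \<sigma>) = \<tau> a x))}"

definition sandwich :: "'n::finite op \<Rightarrow> ('a \<Rightarrow> 'x \<Rightarrow> 'n op) \<Rightarrow> ('a \<Rightarrow> 'x \<Rightarrow> 'n op)" where
  "sandwich \<rho> B = (\<lambda>a x. op_sqrt \<rho> ** B a x ** op_sqrt \<rho>)"

end

theory Submission
  imports Defs
begin

text \<open>Write \<open>N\<^sub>t\<close> for the noisy assemblage \<open>(B\<^sub>a\<^sub>|\<^sub>x + t 1/|A|)/(1 + t)\<close> and \<open>S = \<rho>\<^sup>1\<^sup>/\<^sup>2\<close>.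
  Since \<open>S 1 S = \<rho>\<close>, the noisy version of the state assemblage \<open>S B S\<close> is exactly \<open>S N\<^sub>t S\<close>.
  Sandwiching a parent POVM \<open>G\<^sub>\<lambda>\<close> of \<open>N\<^sub>t\<close> gives the hidden states \<open>S G\<^sub>\<lambda> S / tr(\<rho> G\<^sub>\<lambda>)\<close>, so
  every \<open>t\<close> feasible for incompatibility is feasible for steering and \<open>SR \<le> IR\<close>.  If \<open>\<rho>\<close> has
  full rank, conjugating an LHS model by \<open>S\<^sup>-\<^sup>1\<close> turns the weighted hidden states back into a
  parent POVM, so the two feasible sets coincide.  The only real work is the existence and
  uniqueness of the positive square root, which rests on the spectral theorem for Hermitian
  matrices (obtained by maximising the Rayleigh quotient on invariant subspaces).\<close>

section \<open>Complex inner product and adjoints\<close>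

definition cinner :: "complex^'n::finite \<Rightarrow> complex^'n \<Rightarrow> complex" where
  "cinner v w = (\<Sum>i\<in>UNIV. cnj (v$i) * w$i)"

definition adj :: "'n::finite op \<Rightarrow> 'n op" where
  "adj A = (\<chi> i j. cnj (A$j$i))"

definition hermitian :: "'n::finite op \<Rightarrow> bool" where
  "hermitian A \<longleftrightarrow> adj A = A"

definition orthonormal :: "(complex^'n::finite) set \<Rightarrow> bool" where
  "orthonormal E \<longleftrightarrow> (\<forall>u\<in>E. cinner u u = 1) \<and> (\<forall>u\<in>E. \<forall>w\<in>E. u \<noteq> w \<longrightarrow> cinner u w = 0)"

lemma psd_iff_cinner:
  "psd A \<longleftrightarrow> (\<forall>v. Im (cinner v (A *v v)) = 0 \<and> Re (cinner v (A *v v)) \<ge> 0)"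
  unfolding psd_def cinner_def by simp

lemma cinner_add_right: "cinner v (w + z) = cinner v w + cinner v z"
  unfolding cinner_def by (simp add: distrib_left sum.distrib)

lemma cinner_add_left: "cinner (v + w) z = cinner v z + cinner w z"
  unfolding cinner_def by (simp add: distrib_right sum.distrib)

lemma cinner_diff_right: "cinner v (w - z) = cinner v w - cinner v z"
  unfolding cinner_def by (simp add: right_diff_distrib sum_subtractf)

lemma cinner_diff_left: "cinner (v - w) z = cinner v z - cinner w z"
  unfolding cinner_def by (simp add: left_diff_distrib sum_subtractf)

lemma cinner_scale_right: "cinner v (c *s w) = c * cinner v w"
  unfolding cinner_def by (simp add: sum_distrib_left mult_ac)

lemma cinner_scale_left: "cinner (c *s v) w = cnj c * cinner v w"
  unfolding cinner_def by (simp add: sum_distrib_left mult_ac)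

lemma cinner_zero_right [simp]: "cinner v 0 = 0"
  unfolding cinner_def by simp

lemma cinner_sum_right: "cinner v (\<Sum>u\<in>S. f u) = (\<Sum>u\<in>S. cinner v (f u))"
  unfolding cinner_def by (simp add: sum_distrib_left sum.swap[of _ S])

lemma cinner_commute: "cinner w v = cnj (cinner v w)"
  unfolding cinner_def cnj_sum by (rule sum.cong) (simp_all add: mult.commute)

lemma cinner_adj: "cinner v (A *v w) = cinner (adj A *v v) w"
proof -
  have "cinner v (A *v w) = (\<Sum>i\<in>UNIV. \<Sum>j\<in>UNIV. cnj (v$i) * (A$i$j * w$j))"
    unfolding cinner_def matrix_vector_mult_def by (simp add: sum_distrib_left)
  also have "\<dots> = (\<Sum>j\<in>UNIV. \<Sum>i\<in>UNIV. cnj (v$i) * (A$i$j * w$j))"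
    by (rule sum.swap)
  also have "\<dots> = cinner (adj A *v v) w"
    unfolding cinner_def matrix_vector_mult_def adj_def
    by (simp add: sum_distrib_right sum_distrib_left cnj_sum mult_ac)
  finally show ?thesis .
qed

lemma Re_cinner: "Re (cinner v w) = inner v w"
  unfolding cinner_def inner_vec_def inner_complex_def by (simp add: Re_sum)

lemma cinner_self: "cinner v v = complex_of_real ((norm v)\<^sup>2)"
proof -
  have "cnj z * z = complex_of_real ((cmod z)\<^sup>2)" for z
    using complex_norm_square[of z] by (simp add: mult.commute)
  then have "cinner v v = (\<Sum>i\<in>UNIV. complex_of_real ((cmod (v$i))\<^sup>2))"
    unfolding cinner_def by presburger
  also have "\<dots> = complex_of_real (\<Sum>i\<in>UNIV. (cmod (v$i))\<^sup>2)" by simp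
  also have "(\<Sum>i\<in>UNIV. (cmod (v$i))\<^sup>2) = (norm v)\<^sup>2"
    unfolding norm_vec_def L2_set_def by (simp add: sum_nonneg)
  finally show ?thesis .
qed

lemma cinner_self_eq_0: "cinner v v = 0 \<longleftrightarrow> v = 0"
  by (simp add: cinner_self)

lemma cinner_self_eq_1: "cinner v v = 1 \<longleftrightarrow> norm v = 1"
  unfolding cinner_self of_real_eq_1_iff by (smt (verit) norm_ge_zero power2_eq_1_iff)

lemma cinner_scale_quad_form:
  "cinner (c *s u) (A *v (c *s u)) = complex_of_real ((cmod c)\<^sup>2) * cinner u (A *v u)"
  by (simp add: vector_scalar_commute cinner_scale_left cinner_scale_right mult.assoc[symmetric]
      flip: complex_norm_square)

lemma continuous_on_quad_form: "continuous_on S (\<lambda>v. Re (cinner v (A *v v)))"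
  unfolding cinner_def matrix_vector_mult_def by (simp; intro continuous_intros)

lemma scaleR_eq_scalar_mult: "r *\<^sub>R v = complex_of_real r *s (v :: complex^'n)"
  unfolding vec_eq_iff vector_scaleR_component scaleR_conv_of_real[where 'a=complex] by simp

lemma matrix_vector_mult_sum: "A *v (\<Sum>u\<in>S. f u) = (\<Sum>u\<in>S. A *v f u)"
  unfolding matrix_vector_mult_def
  by (simp add: vec_eq_iff sum_distrib_left sum.swap[of _ S] sum_component)

lemma adj_adj [simp]: "adj (adj A) = A"
  unfolding adj_def by (simp add: vec_eq_iff)

lemma adj_mult: "adj (A ** B) = adj B ** adj A"
  unfolding adj_def matrix_matrix_mult_def by (simp add: vec_eq_iff cnj_sum mult.commute)

lemma adj_mat1 [simp]: "adj (mat 1) = mat 1"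
  unfolding adj_def mat_def by (simp add: vec_eq_iff)

lemma adj_diff: "adj (A - B) = adj A - adj B"
  unfolding adj_def by (simp add: vec_eq_iff)

lemma hermitian_cinner: "hermitian A \<Longrightarrow> cinner u (A *v v) = cinner (A *v u) v"
  unfolding hermitian_def by (metis cinner_adj)

lemma hermitian_quad_form_real:
  assumes "hermitian A"
  shows "cinner v (A *v v) = complex_of_real (Re (cinner v (A *v v)))"
proof -
  have "cinner v (A *v v) = cnj (cinner v (A *v v))"
    using hermitian_cinner[OF assms, of v v] cinner_commute[of "A *v v" v] by simp
  then have "Im (cinner v (A *v v)) = Im (cnj (cinner v (A *v v)))" by (rule arg_cong)
  then show ?thesis by (simp add: complex_eq_iff)
qed

lemma hermitian_cinner_square:
  "hermitian X \<Longrightarrow> cinner (X *v u) (X *v u) = cinner u ((X ** X) *v u)"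
  using hermitian_cinner[of X u "X *v u"] by (simp add: matrix_vector_mul_assoc)

lemma psd_quad_form_real: "psd A \<Longrightarrow> cinner v (A *v v) = complex_of_real (Re (cinner v (A *v v)))"
  unfolding psd_iff_cinner by (simp add: complex_eq_iff)

lemma quad_form_zero_imp_zero:
  fixes B :: "'n::finite op"
  assumes "\<And>v. cinner v (B *v v) = 0"
  shows "B = 0"
proof -
  \<comment> \<open>Polarization: test the form on \<open>x + y\<close> and on \<open>x + \<i> y\<close>.\<close>
  have s: "cinner x (B *v y) = 0" for x y
  proof -
    have e1: "cinner x (B *v y) + cinner y (B *v x) = 0"
      using assms[of "x + y"] assms[of x] assms[of y]
      by (simp add: matrix_vector_right_distrib cinner_add_left cinner_add_right add.commute)
    have e2: "\<i> * cinner x (B *v y) - \<i> * cinner y (B *v x) = 0"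
      using assms[of "x + \<i> *s y"] assms[of x] assms[of y]
      by (simp add: matrix_vector_right_distrib cinner_add_left cinner_add_right
          vector_scalar_commute cinner_scale_left cinner_scale_right algebra_simps)
    have "cinner x (B *v y) = cinner y (B *v x)"
      using e2 by (metis right_diff_distrib' mult_eq_0_iff complex_i_not_zero eq_iff_diff_eq_0)
    with e1 show ?thesis by simp
  qed
  have "B *v y = 0" for y using s[of "B *v y" y] cinner_self_eq_0 by blast
  then show ?thesis by (simp add: matrix_eq)
qed

lemma psd_hermitian:
  assumes "psd A"
  shows "hermitian A"
proof -
  have "cinner v ((A - adj A) *v v) = 0" for v
  proof -
    have "cinner v (adj A *v v) = cinner (A *v v) v"
      using cinner_adj[of v "adj A" v] by simp
    also have "\<dots> = cnj (cinner v (A *v v))" by (rule cinner_commute)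
    also have "\<dots> = cinner v (A *v v)"
      using psd_quad_form_real[OF assms] by (metis complex_cnj_complex_of_real)
    finally show ?thesis by (simp add: matrix_vector_mult_diff_rdistrib cinner_diff_right)
  qed
  then have "A - adj A = 0" by (rule quad_form_zero_imp_zero)
  then show ?thesis unfolding hermitian_def by simp
qed

section \<open>Spectral theorem for Hermitian matrices\<close>

lemma quadratic_nonpos_imp_linear_coeff_zero:
  fixes c d :: real
  assumes "\<And>e. 2*e*c + e\<^sup>2*d \<le> 0"
  shows "c = 0"
proof (rule ccontr)
  assume "c \<noteq> 0"
  define k where "k = \<bar>d\<bar> + 1"
  have k: "k > 0" unfolding k_def by simp
  have "k\<^sup>2 * (2*(c/k)*c + (c/k)\<^sup>2*d) \<le> 0"
    using assms[of "c/k"] by (simp add: mult_nonneg_nonpos)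
  also have "k\<^sup>2 * (2*(c/k)*c + (c/k)\<^sup>2*d) = c\<^sup>2 * (2*k + d)"
    using k by (simp add: field_simps power2_eq_square)
  finally have "c\<^sup>2 * (2*k + d) \<le> 0" .
  moreover have "c\<^sup>2 * (2*k + d) > 0"
    using \<open>c \<noteq> 0\<close> unfolding k_def by (intro mult_pos_pos) auto
  ultimately show False by linarith
qed

text \<open>The maximum of the quadratic form on the unit sphere of an invariant subspace is an
  eigenvalue: moving away from a maximizer \<open>v\<close> in an orthogonal direction \<open>w\<close> can only decrease
  the Rayleigh quotient, which forces \<open>A v \<bottom> w\<close>.\<close>

lemma rayleigh_max_orthogonal:
  fixes A :: "'n::finite op"
  assumes herm: "hermitian A" and v1: "cinner v v = 1" and vw: "cinner v w = 0"
    and max: "\<And>e::real. Re (cinner (v + of_real e *s w) (A *v (v + of_real e *s w)))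
                \<le> Re (cinner v (A *v v)) * Re (cinner (v + of_real e *s w) (v + of_real e *s w))"
  shows "Re (cinner w (A *v v)) = 0"
proof (rule quadratic_nonpos_imp_linear_coeff_zero)
  fix e :: real
  define u where "u = v + complex_of_real e *s w"
  have wv: "cinner w v = 0" using vw cinner_commute[of w v] by simp
  have cross: "cinner v (A *v w) = cnj (cinner w (A *v v))"
    using hermitian_cinner[OF herm, of v w] cinner_commute[of "A *v v" w] by simp
  have "cinner u (A *v u) = cinner v (A *v v) + complex_of_real e * cinner v (A *v w)
      + complex_of_real e * cinner w (A *v v) + complex_of_real e * complex_of_real e * cinner w (A *v w)"
    unfolding u_def
    by (simp only: matrix_vector_right_distrib vector_scalar_commute cinner_add_left cinner_add_right
        cinner_scale_left cinner_scale_right complex_cnj_complex_of_real) (simp add: algebra_simps)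
  then have Au: "Re (cinner u (A *v u))
      = Re (cinner v (A *v v)) + 2*e*Re (cinner w (A *v v)) + e\<^sup>2 * Re (cinner w (A *v w))"
    unfolding cross by (simp add: power2_eq_square)
  have "cinner u u = cinner v v + complex_of_real e * cinner v w
      + complex_of_real e * cinner w v + complex_of_real e * complex_of_real e * cinner w w"
    unfolding u_def
    by (simp only: cinner_add_left cinner_add_right cinner_scale_left cinner_scale_right
        complex_cnj_complex_of_real) (simp add: algebra_simps)
  then have uu: "Re (cinner u u) = 1 + e\<^sup>2 * Re (cinner w w)"
    using v1 vw wv by (simp add: power2_eq_square)
  have "Re (cinner v (A *v v)) + 2*e*Re (cinner w (A *v v)) + e\<^sup>2 * Re (cinner w (A *v w))
      \<le> Re (cinner v (A *v v)) * (1 + e\<^sup>2 * Re (cinner w w))"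
    using max[of e] unfolding u_def[symmetric] Au uu .
  then show "2*e*Re (cinner w (A *v v))
      + e\<^sup>2 * (Re (cinner w (A *v w)) - Re (cinner v (A *v v)) * Re (cinner w w)) \<le> 0"
    by (simp add: algebra_simps)
qed

lemma rayleigh_max_eigenvector:
  fixes A :: "'n::finite op"
  assumes herm: "hermitian A"
    and WA: "\<And>v. v \<in> W \<Longrightarrow> A *v v \<in> W"
    and Wadd: "\<And>v w. v \<in> W \<Longrightarrow> w \<in> W \<Longrightarrow> v + w \<in> W"
    and Wscale: "\<And>c v. v \<in> W \<Longrightarrow> c *s v \<in> W"
    and v: "v \<in> W" "cinner v v = 1"
    and max: "\<And>u. u \<in> W \<Longrightarrow> Re (cinner u (A *v u)) \<le> Re (cinner v (A *v v)) * Re (cinner u u)"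
  shows "A *v v = cinner v (A *v v) *s v"
proof -
  have Re_orth: "Re (cinner w (A *v v)) = 0" if "w \<in> W" "cinner v w = 0" for w
  proof (rule rayleigh_max_orthogonal[OF herm v(2) that(2)])
    fix e :: real
    show "Re (cinner (v + of_real e *s w) (A *v (v + of_real e *s w)))
      \<le> Re (cinner v (A *v v)) * Re (cinner (v + of_real e *s w) (v + of_real e *s w))"
      using Wadd[OF v(1) Wscale[OF that(1)]] by (rule max)
  qed
  have orth: "cinner w (A *v v) = 0" if "w \<in> W" "cinner v w = 0" for w
  proof -
    have "Re (cinner (\<i> *s w) (A *v v)) = 0"
      using Re_orth[OF Wscale[OF that(1)]] that(2) by (simp add: cinner_scale_right)
    then show ?thesis using Re_orth[OF that] by (simp add: cinner_scale_left complex_eq_iff)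
  qed
  define z where "z = A *v v - cinner v (A *v v) *s v"
  have zW: "z \<in> W"
    unfolding z_def using Wadd[OF WA[OF v(1)] Wscale[OF v(1)], of "- cinner v (A *v v)"] by simp
  have vz: "cinner v z = 0"
    unfolding z_def using v(2) by (simp add: cinner_diff_right cinner_scale_right)
  have "cinner z z = cinner z (A *v v) - cinner v (A *v v) * cinner z v"
    by (subst (2) z_def) (simp only: cinner_diff_right cinner_scale_right)
  also have "\<dots> = 0" using orth[OF zW vz] vz cinner_commute[of z v] by simp
  finally have "z = 0" by (simp add: cinner_self_eq_0)
  then show ?thesis unfolding z_def by (simp only: right_minus_eq)
qed

lemma rayleigh_max_exists:
  fixes A :: "'n::finite op"
  assumes Wadd: "\<And>v w. v \<in> W \<Longrightarrow> w \<in> W \<Longrightarrow> v + w \<in> W"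
    and Wscale: "\<And>c v. v \<in> W \<Longrightarrow> c *s v \<in> W"
    and w0: "w0 \<in> W" "w0 \<noteq> 0"
  shows "\<exists>v\<in>W. cinner v v = 1 \<and>
    (\<forall>u\<in>W. Re (cinner u (A *v u)) \<le> Re (cinner v (A *v v)) * Re (cinner u u))"
proof -
  have scaleR_W: "r *\<^sub>R u \<in> W" if "u \<in> W" for r u
    using Wscale[OF that] by (simp add: scaleR_eq_scalar_mult)
  have "0 \<in> W" using scaleR_W[OF w0(1), of 0] by simp
  then have "subspace W" unfolding subspace_def by (simp add: Wadd scaleR_W)
  then have compact: "compact (W \<inter> sphere 0 1)" by (simp add: closed_subspace closed_Int_compact)
  have unit: "(1 / norm u) *\<^sub>R u \<in> W \<inter> sphere 0 1" if "u \<in> W" "u \<noteq> 0" for u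
    using scaleR_W[OF that(1)] that(2) by simp
  have nonempty: "W \<inter> sphere 0 1 \<noteq> {}" using unit[OF w0] by blast
  obtain v where v: "v \<in> W \<inter> sphere 0 1"
    and vmax: "\<And>y. y \<in> W \<inter> sphere 0 1 \<Longrightarrow> Re (cinner y (A *v y)) \<le> Re (cinner v (A *v v))"
    using continuous_attains_sup[OF compact nonempty continuous_on_quad_form] by blast
  have "Re (cinner u (A *v u)) \<le> Re (cinner v (A *v v)) * Re (cinner u u)" if "u \<in> W" for u
  proof (cases "u = 0")
    case False
    then have "norm u > 0" by simp
    then have "Re (cinner u (A *v u)) = (norm u)\<^sup>2 * ((1 / norm u)\<^sup>2 * Re (cinner u (A *v u)))"
      by (simp add: field_simps)
    also have "\<dots> \<le> (norm u)\<^sup>2 * Re (cinner v (A *v v))"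
      using vmax[OF unit[OF that False]]
      unfolding scaleR_eq_scalar_mult cinner_scale_quad_form
      by (intro mult_left_mono) (simp_all add: norm_divide)
    also have "\<dots> = Re (cinner v (A *v v)) * Re (cinner u u)" by (simp add: cinner_self)
    finally show ?thesis .
  qed simp
  moreover have "cinner v v = 1" using v by (simp add: cinner_self_eq_1)
  ultimately show ?thesis using v by (intro bexI[of _ v]) auto
qed

lemma hermitian_invariant_subspace_eigenvector:
  fixes A :: "'n::finite op"
  assumes "hermitian A"
    and "\<And>v. v \<in> W \<Longrightarrow> A *v v \<in> W"
    and "\<And>v w. v \<in> W \<Longrightarrow> w \<in> W \<Longrightarrow> v + w \<in> W"
    and "\<And>c v. v \<in> W \<Longrightarrow> c *s v \<in> W"
    and "w0 \<in> W" "w0 \<noteq> 0"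
  shows "\<exists>v\<in>W. cinner v v = 1 \<and> A *v v = cinner v (A *v v) *s v"
proof -
  obtain v where v: "v \<in> W" "cinner v v = 1"
    and max: "\<And>u. u \<in> W \<Longrightarrow> Re (cinner u (A *v u)) \<le> Re (cinner v (A *v v)) * Re (cinner u u)"
    using rayleigh_max_exists[OF assms(3-6), of A] by blast
  have "A *v v = cinner v (A *v v) *s v"
    by (rule rayleigh_max_eigenvector[OF assms(1-4) v max])
  then show ?thesis using v by blast
qed

lemma orthonormal_cinner_sum:
  assumes "finite E" "orthonormal E" "w \<in> E"
  shows "cinner w (\<Sum>u\<in>E. c u *s u) = c w"
proof -
  have "cinner w (\<Sum>u\<in>E. c u *s u) = (\<Sum>u\<in>E. c u * cinner w u)"
    by (simp only: cinner_sum_right cinner_scale_right)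
  also have "\<dots> = c w * cinner w w + (\<Sum>u\<in>E - {w}. c u * cinner w u)"
    using assms(1,3) by (rule sum.remove)
  also have "(\<Sum>u\<in>E - {w}. c u * cinner w u) = 0"
    using assms(2,3) unfolding orthonormal_def by (intro sum.neutral) auto
  finally show ?thesis using assms(2,3) unfolding orthonormal_def by simp
qed

lemma orthonormal_independent:
  assumes "orthonormal E"
  shows "independent E"
proof (rule pairwise_orthogonal_independent)
  show "pairwise orthogonal E"
    using assms unfolding orthonormal_def pairwise_def orthogonal_def
    by (metis Re_cinner zero_complex.sel(1))
  show "0 \<notin> E" using assms unfolding orthonormal_def by auto
qed

lemma orthonormal_insert:
  assumes "orthonormal E" "cinner v v = 1" "\<forall>u\<in>E. cinner u v = 0"
  shows "orthonormal (insert v E)"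
proof -
  have "cinner v u = 0" if "u \<in> E" for u
    using assms(3) that cinner_commute[of v u] by simp
  then show ?thesis using assms unfolding orthonormal_def by auto
qed

lemma orthonormal_expansion:
  assumes "finite E" "orthonormal E" and complete: "\<And>z. \<forall>u\<in>E. cinner u z = 0 \<Longrightarrow> z = 0"
  shows "v = (\<Sum>u\<in>E. cinner u v *s u)"
proof -
  have "cinner u (v - (\<Sum>u\<in>E. cinner u v *s u)) = 0" if "u \<in> E" for u
    using orthonormal_cinner_sum[OF assms(1,2) that, of "\<lambda>u. cinner u v"]
    by (simp add: cinner_diff_right)
  then have "v - (\<Sum>u\<in>E. cinner u v *s u) = 0" using complete by blast
  then show ?thesis by simp
qed

lemma hermitian_orthogonal_complement_invariant:
  assumes "hermitian A" "\<forall>u\<in>E. A *v u = cinner u (A *v u) *s u" "\<forall>u\<in>E. cinner u w = 0"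
  shows "\<forall>u\<in>E. cinner u (A *v w) = 0"
proof
  fix u assume "u \<in> E"
  have "cinner u (A *v w) = cinner (A *v u) w" by (rule hermitian_cinner[OF assms(1)])
  also have "\<dots> = cnj (cinner u (A *v u)) * cinner u w"
    using assms(2) \<open>u \<in> E\<close> by (metis cinner_scale_left)
  finally show "cinner u (A *v w) = 0" using assms(3) \<open>u \<in> E\<close> by simp
qed

text \<open>A maximal orthonormal family of eigenvectors spans, since its orthogonal complement is
  invariant and would otherwise contain a further eigenvector.\<close>

lemma hermitian_eigenbasis:
  fixes A :: "'n::finite op"
  assumes herm: "hermitian A"
  shows "\<exists>E. finite E \<and> orthonormal E \<and> (\<forall>u\<in>E. A *v u = cinner u (A *v u) *s u)
    \<and> (\<forall>v. v = (\<Sum>u\<in>E. cinner u v *s u))"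
proof -
  define P where "P E \<longleftrightarrow> orthonormal E \<and> (\<forall>u\<in>E. A *v u = cinner u (A *v u) *s u)" for E
  have bound: "finite E \<and> card E < Suc DIM(complex^'n)" if "P E" for E
    using independent_bound[OF orthonormal_independent, of E] that unfolding P_def
    by (simp add: less_Suc_eq_le)
  have "P {}" unfolding P_def orthonormal_def by simp
  then obtain E where PE: "P E" and Emax: "\<And>E'. P E' \<Longrightarrow> card E' \<le> card E"
    using ex_has_greatest_nat[of P "{}" card "Suc DIM(complex^'n)"] bound by blast
  have fin: "finite E" using bound[OF PE] by blast
  define W where "W = {z. \<forall>u\<in>E. cinner u z = 0}"
  have invariant: "A *v w \<in> W" if "w \<in> W" for w
    using hermitian_orthogonal_complement_invariant[OF herm] PE that unfolding P_def W_def by blast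
  have Wadd: "v + w \<in> W" if "v \<in> W" "w \<in> W" for v w
    using that unfolding W_def by (simp add: cinner_add_right)
  have Wscale: "c *s v \<in> W" if "v \<in> W" for c v
    using that unfolding W_def by (simp add: cinner_scale_right)
  have complete: "z = 0" if "z \<in> W" for z
  proof (rule ccontr)
    assume "z \<noteq> 0"
    then obtain v where v: "v \<in> W" "cinner v v = 1" "A *v v = cinner v (A *v v) *s v"
      using hermitian_invariant_subspace_eigenvector[OF herm invariant Wadd Wscale \<open>z \<in> W\<close>] by blast
    have "v \<notin> E" using v(1,2) unfolding W_def by auto
    have "P (insert v E)"
      using PE v orthonormal_insert[of E v] unfolding P_def W_def by auto
    then have "card (insert v E) \<le> card E" by (rule Emax)
    then show False using fin \<open>v \<notin> E\<close> by simp
  qed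
  have "v = (\<Sum>u\<in>E. cinner u v *s u)" for v
    using orthonormal_expansion[OF fin _ complete] PE unfolding P_def W_def by blast
  then show ?thesis using fin PE unfolding P_def by blast
qed

section \<open>Positive square roots\<close>

text \<open>\<open>diag_op E f\<close> is the operator \<open>\<Sum>\<^sub>u\<^sub>\<in>\<^sub>E f(u) |u\<rangle>\<langle>u|\<close>.\<close>

definition diag_op :: "(complex^'n::finite) set \<Rightarrow> (complex^'n \<Rightarrow> complex) \<Rightarrow> 'n op" where
  "diag_op E f = (\<chi> i j. \<Sum>u\<in>E. f u * u$i * cnj (u$j))"

lemma diag_op_mult_vec: "diag_op E f *v v = (\<Sum>u\<in>E. (f u * cinner u v) *s u)"
proof -
  have "(diag_op E f *v v)$i = (\<Sum>u\<in>E. f u * cinner u v * u$i)" for i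
  proof -
    have "(diag_op E f *v v)$i = (\<Sum>j\<in>UNIV. \<Sum>u\<in>E. f u * u$i * cnj (u$j) * v$j)"
      unfolding diag_op_def matrix_vector_mult_def by (simp add: sum_distrib_right)
    also have "\<dots> = (\<Sum>u\<in>E. \<Sum>j\<in>UNIV. f u * u$i * (cnj (u$j) * v$j))"
      by (subst sum.swap) (simp add: mult.assoc)
    also have "\<dots> = (\<Sum>u\<in>E. f u * cinner u v * u$i)"
      unfolding cinner_def by (simp add: sum_distrib_left[symmetric] mult_ac)
    finally show ?thesis .
  qed
  then show ?thesis by (simp add: vec_eq_iff sum_component)
qed

lemma diag_op_cinner:
  assumes "finite E" "orthonormal E" "w \<in> E"
  shows "cinner w (diag_op E f *v v) = f w * cinner w v"
  unfolding diag_op_mult_vec using orthonormal_cinner_sum[OF assms, of "\<lambda>u. f u * cinner u v"] .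

lemma diag_op_mult:
  assumes "finite E" "orthonormal E"
  shows "diag_op E f ** diag_op E g = diag_op E (\<lambda>u. f u * g u)"
proof -
  have "(diag_op E f ** diag_op E g) *v v = diag_op E (\<lambda>u. f u * g u) *v v" for v
  proof -
    have "(diag_op E f ** diag_op E g) *v v = diag_op E f *v (diag_op E g *v v)"
      by (simp add: matrix_vector_mul_assoc)
    also have "\<dots> = (\<Sum>u\<in>E. (f u * (g u * cinner u v)) *s u)"
      unfolding diag_op_mult_vec[of E f] by (rule sum.cong) (simp_all add: diag_op_cinner[OF assms])
    also have "\<dots> = diag_op E (\<lambda>u. f u * g u) *v v"
      by (simp add: diag_op_mult_vec mult.assoc)
    finally show ?thesis .
  qed
  then show ?thesis by (simp add: matrix_eq)
qed

lemma psd_diag_op: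
  assumes "\<And>u. u \<in> E \<Longrightarrow> r u \<ge> 0"
  shows "psd (diag_op E (\<lambda>u. complex_of_real (r u)))"
  unfolding psd_iff_cinner
proof
  fix v
  have "cinner v (diag_op E (\<lambda>u. complex_of_real (r u)) *v v)
      = (\<Sum>u\<in>E. complex_of_real (r u) * cinner u v * cinner v u)"
    unfolding diag_op_mult_vec by (simp only: cinner_sum_right cinner_scale_right)
  also have "\<dots> = complex_of_real (\<Sum>u\<in>E. r u * (cmod (cinner u v))\<^sup>2)"
    unfolding of_real_sum
  proof (rule sum.cong[OF refl])
    fix u
    have "cinner u v * cinner v u = complex_of_real ((cmod (cinner u v))\<^sup>2)"
      using cinner_commute[of v u] complex_norm_square[of "cinner u v"] by simp
    then show "complex_of_real (r u) * cinner u v * cinner v u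
        = complex_of_real (r u * (cmod (cinner u v))\<^sup>2)"
      by (simp add: mult.assoc)
  qed
  finally show "Im (cinner v (diag_op E (\<lambda>u. complex_of_real (r u)) *v v)) = 0
      \<and> Re (cinner v (diag_op E (\<lambda>u. complex_of_real (r u)) *v v)) \<ge> 0"
    using assms by (simp add: sum_nonneg)
qed

lemma eigenbasis_diag_op:
  assumes eigen: "\<forall>u\<in>E. A *v u = \<mu> u *s u" and expansion: "\<forall>v. v = (\<Sum>u\<in>E. cinner u v *s u)"
  shows "A = diag_op E \<mu>"
proof -
  have "A *v v = diag_op E \<mu> *v v" for v
  proof -
    have "A *v v = A *v (\<Sum>u\<in>E. cinner u v *s u)" using expansion by metis
    also have "\<dots> = (\<Sum>u\<in>E. cinner u v *s (A *v u))"
      by (simp add: matrix_vector_mult_sum vector_scalar_commute)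
    also have "\<dots> = (\<Sum>u\<in>E. (\<mu> u * cinner u v) *s u)"
      using eigen by (intro sum.cong) (simp_all add: mult.commute)
    finally show ?thesis by (simp add: diag_op_mult_vec)
  qed
  then show ?thesis by (simp add: matrix_eq)
qed

lemma psd_sqrt_exists:
  assumes "psd A"
  shows "\<exists>X. psd X \<and> X ** X = A"
proof -
  obtain E where fin: "finite E" and on: "orthonormal E"
    and eigen: "\<forall>u\<in>E. A *v u = cinner u (A *v u) *s u"
    and expansion: "\<forall>v. v = (\<Sum>u\<in>E. cinner u v *s u)"
    using hermitian_eigenbasis[OF psd_hermitian[OF assms]] by blast
  define eig where "eig u = Re (cinner u (A *v u))" for u
  have eig_nonneg: "eig u \<ge> 0" for u using assms unfolding psd_iff_cinner eig_def by blast
  have "\<forall>u\<in>E. A *v u = complex_of_real (eig u) *s u"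
    using eigen psd_quad_form_real[OF assms] unfolding eig_def by metis
  then have A_diag: "A = diag_op E (\<lambda>u. complex_of_real (eig u))"
    using expansion by (rule eigenbasis_diag_op)
  define X where "X = diag_op E (\<lambda>u. complex_of_real (sqrt (eig u)))"
  have "X ** X = A"
    unfolding X_def diag_op_mult[OF fin on] A_diag by (simp add: eig_nonneg flip: of_real_mult)
  moreover have "psd X" unfolding X_def by (rule psd_diag_op) (simp add: eig_nonneg)
  ultimately show ?thesis by blast
qed

lemma psd_quad_form_eq_0:
  assumes "psd M" "cinner w (M *v w) = 0"
  shows "M *v w = 0"
proof -
  obtain S where "psd S" and S_square: "S ** S = M" using psd_sqrt_exists[OF assms(1)] by blast
  have "cinner (S *v w) (S *v w) = cinner w (M *v w)"
    using hermitian_cinner[OF psd_hermitian[OF \<open>psd S\<close>], of w "S *v w"]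
    by (simp add: S_square[symmetric] matrix_vector_mul_assoc)
  then have "S *v w = 0" using assms(2) by (simp only: cinner_self_eq_0)
  then show ?thesis by (simp add: S_square[symmetric] matrix_vector_mul_assoc[symmetric])
qed

text \<open>If \<open>X\<^sup>2 = Y\<^sup>2\<close> and \<open>(X - Y) u = \<mu> u\<close>, then \<open>\<mu> (\<langle>u, X u\<rangle> + \<langle>u, Y u\<rangle>) = \<parallel>X u\<parallel>\<^sup>2 - \<parallel>Y u\<parallel>\<^sup>2 = 0\<close>;
  so either \<open>\<mu> = 0\<close> or both nonnegative forms vanish at \<open>u\<close>, which forces \<open>X u = Y u = 0\<close>.\<close>

lemma psd_eq_square_diff_eigenvector:
  assumes pX: "psd X" and pY: "psd Y" and eq: "X ** X = Y ** Y"
    and eigen: "(X - Y) *v u = complex_of_real \<mu> *s u"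
  shows "(X - Y) *v u = 0"
proof -
  define a where "a = X *v u"
  define b where "b = Y *v u"
  have ab: "a - b = complex_of_real \<mu> *s u"
    unfolding a_def b_def using eigen by (simp add: matrix_vector_mult_diff_rdistrib)
  define p where "p = Re (cinner u a)"
  define q where "q = Re (cinner u b)"
  have p: "cinner u a = complex_of_real p" "p \<ge> 0"
    unfolding p_def a_def using psd_quad_form_real[OF pX, of u] pX psd_iff_cinner by auto
  have q: "cinner u b = complex_of_real q" "q \<ge> 0"
    unfolding q_def b_def using psd_quad_form_real[OF pY, of u] pY psd_iff_cinner by auto
  have aa: "cinner a a = cinner b b"
    unfolding a_def b_def hermitian_cinner_square[OF psd_hermitian[OF pX]]
      hermitian_cinner_square[OF psd_hermitian[OF pY]] eq ..
  have "complex_of_real \<mu> * complex_of_real p + complex_of_real \<mu> * complex_of_real q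
      = cinner (a - b) a + cinner b (a - b)"
    unfolding ab cinner_scale_left cinner_scale_right using p(1) q(1) cinner_commute[of b u] by simp
  also have "\<dots> = 0" using aa by (simp add: cinner_diff_left cinner_diff_right)
  finally have "\<mu> * (p + q) = 0" by (simp flip: of_real_mult of_real_add add: distrib_left)
  then have "\<mu> = 0 \<or> (p = 0 \<and> q = 0)" using p(2) q(2) by auto
  then show ?thesis
  proof
    assume "p = 0 \<and> q = 0"
    then have "X *v u = 0" "Y *v u = 0"
      using psd_quad_form_eq_0[OF pX, of u] psd_quad_form_eq_0[OF pY, of u] p(1) q(1)
      unfolding a_def b_def by auto
    then show ?thesis by (simp add: matrix_vector_mult_diff_rdistrib)
  qed (use eigen in simp)
qed

lemma psd_sqrt_unique:
  fixes X Y :: "'n::finite op"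
  assumes "psd X" "psd Y" "X ** X = Y ** Y"
  shows "X = Y"
proof -
  have herm: "hermitian (X - Y)"
    using psd_hermitian[OF assms(1)] psd_hermitian[OF assms(2)] unfolding hermitian_def adj_diff by simp
  obtain E where eigen: "\<forall>u\<in>E. (X - Y) *v u = cinner u ((X - Y) *v u) *s u"
    and expansion: "\<forall>v. v = (\<Sum>u\<in>E. cinner u v *s u)"
    using hermitian_eigenbasis[OF herm] by blast
  have "(X - Y) *v u = 0" if "u \<in> E" for u
  proof -
    have "(X - Y) *v u = complex_of_real (Re (cinner u ((X - Y) *v u))) *s u"
      using eigen that hermitian_quad_form_real[OF herm, of u] by metis
    then show ?thesis by (rule psd_eq_square_diff_eigenvector[OF assms])
  qed
  then have "\<forall>u\<in>E. (X - Y) *v u = 0 *s u" by simp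
  then have "X - Y = diag_op E (\<lambda>_. 0)" using expansion by (rule eigenbasis_diag_op)
  then show ?thesis by (simp add: diag_op_def vec_eq_iff)
qed

lemma op_sqrt:
  assumes "psd A"
  shows "psd (op_sqrt A)" "op_sqrt A ** op_sqrt A = A"
proof -
  have "\<exists>!X. psd X \<and> X ** X = A"
    using psd_sqrt_exists[OF assms] psd_sqrt_unique by metis
  then have "psd (op_sqrt A) \<and> op_sqrt A ** op_sqrt A = A"
    unfolding op_sqrt_def by (rule theI')
  then show "psd (op_sqrt A)" "op_sqrt A ** op_sqrt A = A" by auto
qed

section \<open>Sandwiching, joint measurability and steering\<close>

lemma matrix_mul_sum_right: "(A::'n::finite op) ** (\<Sum>l\<in>L. f l) = (\<Sum>l\<in>L. A ** f l)"
  unfolding matrix_matrix_mult_def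
  by (simp add: vec_eq_iff sum_component sum_distrib_left sum.swap[of _ L])

lemma matrix_mul_sum_left: "(\<Sum>l\<in>L. f l) ** (A::'n::finite op) = (\<Sum>l\<in>L. f l ** A)"
  unfolding matrix_matrix_mult_def
  by (simp add: vec_eq_iff sum_component sum_distrib_right sum.swap[of _ L])

lemma matrix_add_rdistrib: "((A::'n::finite op) + B) ** C = A ** C + B ** C"
  unfolding matrix_matrix_mult_def by (simp add: vec_eq_iff distrib_right sum.distrib)

lemma matrix_mul_scaleR_left: "(r *\<^sub>R (A::'n::finite op)) ** C = r *\<^sub>R (A ** C)"
  by (simp add: scalar_matrix_assoc)

lemma matrix_mul_scaleR_right: "(A::'n::finite op) ** (r *\<^sub>R C) = r *\<^sub>R (A ** C)"
  by (simp add: matrix_scalar_ac scalar_matrix_assoc)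

lemma trace_sum: "trace (\<Sum>l\<in>L. f l) = (\<Sum>l\<in>L. trace (f l :: 'n::finite op))"
  unfolding trace_def by (simp add: sum_component sum.swap[of _ L])

lemma trace_scaleR: "trace (r *\<^sub>R (M::'n::finite op)) = complex_of_real r * trace M"
  unfolding trace_def by (simp add: scaleR_conv_of_real[where 'a=complex] sum_distrib_left)

lemma psd_sandwich:
  assumes "psd M"
  shows "psd (C ** M ** adj C)"
  unfolding psd_iff_cinner
proof
  fix v
  have "cinner v ((C ** M ** adj C) *v v) = cinner (adj C *v v) (M *v (adj C *v v))"
    by (simp add: matrix_vector_mul_assoc[symmetric] cinner_adj)
  then show "Im (cinner v ((C ** M ** adj C) *v v)) = 0 \<and> Re (cinner v ((C ** M ** adj C) *v v)) \<ge> 0"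
    using assms unfolding psd_iff_cinner by simp
qed

lemma psd_scaleR:
  assumes "psd M" "r \<ge> 0"
  shows "psd (r *\<^sub>R M)"
proof -
  have "(r *\<^sub>R M) *v v = complex_of_real r *s (M *v v)" for v
    unfolding matrix_vector_mult_def
    by (simp add: vec_eq_iff scaleR_conv_of_real[where 'a=complex] sum_distrib_left mult_ac)
  then show ?thesis using assms unfolding psd_iff_cinner by (simp add: cinner_scale_right)
qed

lemma psd_mat1: "psd (mat 1 :: 'n::finite op)"
  unfolding psd_iff_cinner by (simp add: cinner_self)

lemma cinner_axis_mult_vec_axis: "cinner (axis i 1) (M *v axis j 1) = M $ i $ j"
  unfolding cinner_def axis_def matrix_vector_mult_def
  by (simp add: if_distrib if_distribR cong: if_cong)

lemma trace_eq_sum_cinner_axis: "trace M = (\<Sum>i\<in>UNIV. cinner (axis i 1) (M *v axis i 1))"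
  unfolding trace_def cinner_axis_mult_vec_axis ..

lemma psd_trace:
  assumes "psd M"
  shows "trace M = complex_of_real (Re (trace M))" "Re (trace M) \<ge> 0"
  using assms unfolding trace_eq_sum_cinner_axis psd_iff_cinner
  by (simp_all add: complex_eq_iff Im_sum Re_sum sum_nonneg)

lemma psd_trace_eq_0:
  assumes "psd M" "trace M = 0"
  shows "M = 0"
proof -
  have "Re (cinner (axis i 1) (M *v axis i 1)) = 0" for i
    using assms sum_nonneg_eq_0_iff[of UNIV "\<lambda>i. Re (cinner (axis i 1) (M *v axis i 1))"]
    unfolding trace_eq_sum_cinner_axis psd_iff_cinner by (simp add: Re_sum[symmetric])
  then have "cinner (axis i 1) (M *v axis i 1) = 0" for i
    using psd_quad_form_real[OF assms(1), of "axis i 1"] by simp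
  then have "M *v axis i 1 = 0" for i by (rule psd_quad_form_eq_0[OF assms(1)])
  then have "M $ k $ i = 0" for k i using cinner_axis_mult_vec_axis[of k M i] by simp
  then show ?thesis by (simp add: vec_eq_iff)
qed

text \<open>The density \<open>\<sigma>\<close> only serves as the hidden state when \<open>T = 0\<close>.\<close>

lemma psd_eq_scaleR_density:
  fixes T \<sigma> :: "'n::finite op"
  assumes "psd T" "density_op \<sigma>"
  shows "\<exists>r. density_op r \<and> T = Re (trace T) *\<^sub>R r"
proof (cases "Re (trace T) = 0")
  case True
  then have "T = 0" using psd_trace[OF assms(1)] psd_trace_eq_0[OF assms(1)] by simp
  then show ?thesis using True assms(2) by (intro exI[of _ \<sigma>]) simp
next
  case False
  then have "Re (trace T) > 0" using psd_trace(2)[OF assms(1)] by simp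
  have "trace ((1 / Re (trace T)) *\<^sub>R T) = complex_of_real (1 / Re (trace T)) * complex_of_real (Re (trace T))"
    unfolding trace_scaleR using psd_trace(1)[OF assms(1)] by simp
  also have "\<dots> = 1" using False by (simp flip: of_real_mult)
  finally have "density_op ((1 / Re (trace T)) *\<^sub>R T)"
    unfolding density_op_def using psd_scaleR[OF assms(1)] \<open>Re (trace T) > 0\<close> by simp
  then show ?thesis using False by auto
qed

lemma povm_sandwich_trace_sum:
  assumes "density_op (C ** adj C)" "povm G L"
  shows "(\<Sum>l\<in>L. Re (trace (C ** G l ** adj C))) = 1"
proof -
  have psd: "psd (C ** G l ** adj C)" if "l \<in> L" for l
    using psd_sandwich assms(2) that unfolding povm_def by blast
  have "(\<Sum>l\<in>L. C ** G l ** adj C) = C ** (\<Sum>l\<in>L. G l) ** adj C"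
    by (simp only: matrix_mul_sum_right matrix_mul_sum_left)
  also have "\<dots> = C ** adj C" using assms(2) unfolding povm_def by simp
  finally have sum: "(\<Sum>l\<in>L. C ** G l ** adj C) = C ** adj C" .
  have "complex_of_real (\<Sum>l\<in>L. Re (trace (C ** G l ** adj C))) = (\<Sum>l\<in>L. trace (C ** G l ** adj C))"
    unfolding of_real_sum by (intro sum.cong refl) (simp add: psd_trace(1)[OF psd, symmetric])
  also have "\<dots> = 1" using assms(1) sum unfolding density_op_def trace_sum[symmetric] by simp
  finally show ?thesis by (simp only: of_real_eq_1_iff)
qed

lemma JM_imp_LHS_sandwich:
  fixes D :: "'a::finite \<Rightarrow> 'x::finite \<Rightarrow> 'n::finite op"
  assumes \<rho>: "density_op (C ** adj C)" and "JM D"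
  shows "LHS (\<lambda>a x. C ** D a x ** adj C)"
proof -
  obtain L :: "nat set" and G :: "nat \<Rightarrow> 'n op" and p :: "'a \<Rightarrow> 'x \<Rightarrow> nat \<Rightarrow> real"
    where L: "finite L" and G: "povm G L"
      and p: "\<forall>a x l. l \<in> L \<longrightarrow> p a x l \<ge> 0" "\<forall>x l. l \<in> L \<longrightarrow> (\<Sum>a\<in>UNIV. p a x l) = 1"
      and D: "\<forall>a x. D a x = (\<Sum>l\<in>L. p a x l *\<^sub>R G l)"
    using \<open>JM D\<close> unfolding JM_def by blast
  define T where "T l = C ** G l ** adj C" for l
  define q where "q l = Re (trace (T l))" for l
  have T_psd: "psd (T l)" if "l \<in> L" for l
    using psd_sandwich G that unfolding povm_def T_def by blast
  have "\<forall>l\<in>L. \<exists>r. density_op r \<and> T l = q l *\<^sub>R r"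
    using psd_eq_scaleR_density[OF T_psd \<rho>] unfolding q_def by blast
  then obtain r where r: "\<forall>l\<in>L. density_op (r l) \<and> T l = q l *\<^sub>R r l"
    by (rule bchoice[elim_format]) blast
  have q_sum: "(\<Sum>l\<in>L. q l) = 1"
    using povm_sandwich_trace_sum[OF \<rho> G] unfolding q_def T_def .
  have q_nonneg: "\<forall>l\<in>L. q l \<ge> 0" using psd_trace(2)[OF T_psd] unfolding q_def by blast
  have model: "C ** D a x ** adj C = (\<Sum>l\<in>L. (q l * p a x l) *\<^sub>R r l)" for a x
  proof -
    have "C ** D a x ** adj C = (\<Sum>l\<in>L. p a x l *\<^sub>R T l)"
      unfolding D[rule_format] T_def
      by (simp only: matrix_mul_sum_right matrix_mul_sum_left matrix_mul_scaleR_left matrix_mul_scaleR_right)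
    also have "\<dots> = (\<Sum>l\<in>L. (q l * p a x l) *\<^sub>R r l)"
      using r by (intro sum.cong) (simp_all add: mult.commute)
    finally show ?thesis .
  qed
  have r_density: "\<forall>l\<in>L. density_op (r l)" using r by blast
  show ?thesis unfolding LHS_def using L q_sum q_nonneg p r_density model
    by (intro exI[of _ L] exI[of _ q] exI[of _ p] exI[of _ r]) simp
qed

lemma LHS_reduced_state:
  assumes "\<forall>x l. l \<in> L \<longrightarrow> (\<Sum>a\<in>UNIV. p a x l) = 1"
    and "\<forall>a x. \<sigma> a x = (\<Sum>l\<in>L. (q l * p a x l) *\<^sub>R r l)"
  shows "(\<Sum>a\<in>UNIV. \<sigma> a x) = (\<Sum>l\<in>L. q l *\<^sub>R (r l :: 'n::finite op))"
proof -
  have "(\<Sum>a\<in>UNIV. \<sigma> a x) = (\<Sum>l\<in>L. \<Sum>a\<in>UNIV. (q l * p a x l) *\<^sub>R r l)"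
    using assms(2) sum.swap by simp
  also have "\<dots> = (\<Sum>l\<in>L. q l *\<^sub>R r l)"
  proof (rule sum.cong[OF refl])
    fix l assume "l \<in> L"
    then have "(\<Sum>a\<in>UNIV. q l * p a x l) = q l"
      using assms(1) by (simp add: sum_distrib_left[symmetric])
    then show "(\<Sum>a\<in>UNIV. (q l * p a x l) *\<^sub>R r l) = q l *\<^sub>R r l"
      by (simp add: scaleR_sum_left[symmetric])
  qed
  finally show ?thesis .
qed

text \<open>Conversely, an invertible \<open>C\<close> can be undone: conjugating an LHS model by \<open>C\<^sup>-\<^sup>1\<close> turns
  its weighted hidden states into a parent POVM, which sums to \<open>1\<close> because the model
  reproduces the reduced state \<open>C C\<^sup>\<dagger>\<close>.\<close>

lemma LHS_sandwich_imp_JM: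
  fixes N :: "'a::finite \<Rightarrow> 'x::finite \<Rightarrow> 'n::finite op"
  assumes "invertible C" and N_sum: "\<And>x. (\<Sum>a\<in>UNIV. N a x) = mat 1"
    and "LHS (\<lambda>a x. C ** N a x ** adj C)"
  shows "JM N"
proof -
  obtain L :: "nat set" and q :: "nat \<Rightarrow> real" and p :: "'a \<Rightarrow> 'x \<Rightarrow> nat \<Rightarrow> real"
    and r :: "nat \<Rightarrow> 'n op" where L: "finite L" and q: "\<forall>l\<in>L. q l \<ge> 0"
    and p: "\<forall>a x l. l \<in> L \<longrightarrow> p a x l \<ge> 0" "\<forall>x l. l \<in> L \<longrightarrow> (\<Sum>a\<in>UNIV. p a x l) = 1"
    and r: "\<forall>l\<in>L. density_op (r l)"
    and model: "\<forall>a x. C ** N a x ** adj C = (\<Sum>l\<in>L. (q l * p a x l) *\<^sub>R r l)"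
    using assms(3) unfolding LHS_def by blast
  obtain T where CT: "C ** T = mat 1" and TC: "T ** C = mat 1"
    using \<open>invertible C\<close> unfolding invertible_def by blast
  have CT_adj: "adj C ** adj T = mat 1"
    using arg_cong[OF TC, of adj] by (simp add: adj_mult)
  define G where "G l = q l *\<^sub>R (T ** r l ** adj T)" for l
  have "psd (G l)" if "l \<in> L" for l
    unfolding G_def using psd_scaleR[OF psd_sandwich] r q that unfolding density_op_def by blast
  moreover have "(\<Sum>l\<in>L. G l) = mat 1"
  proof -
    obtain x0 :: 'x where True by blast
    have "(\<Sum>l\<in>L. q l *\<^sub>R r l) = (\<Sum>a\<in>UNIV. C ** N a x0 ** adj C)"
      using LHS_reduced_state[OF p(2) model] by simp
    also have "\<dots> = C ** (\<Sum>a\<in>UNIV. N a x0) ** adj C"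
      by (simp only: matrix_mul_sum_right matrix_mul_sum_left)
    finally have reduced: "(\<Sum>l\<in>L. q l *\<^sub>R r l) = C ** adj C" using N_sum by simp
    have "(\<Sum>l\<in>L. G l) = T ** (\<Sum>l\<in>L. q l *\<^sub>R r l) ** adj T"
      unfolding G_def
      by (simp only: matrix_mul_sum_right matrix_mul_sum_left matrix_mul_scaleR_left
          matrix_mul_scaleR_right)
    also have "\<dots> = (T ** C) ** (adj C ** adj T)" unfolding reduced by (simp add: matrix_mul_assoc)
    finally show ?thesis using TC CT_adj by simp
  qed
  moreover have "N a x = (\<Sum>l\<in>L. p a x l *\<^sub>R G l)" for a x
  proof -
    have "T ** (C ** N a x ** adj C) ** adj T = (T ** C) ** N a x ** (adj C ** adj T)"
      by (simp add: matrix_mul_assoc)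
    then have "N a x = T ** (C ** N a x ** adj C) ** adj T" using TC CT_adj by simp
    then show ?thesis
      unfolding model[rule_format] G_def
      by (simp only: matrix_mul_sum_right matrix_mul_sum_left matrix_mul_scaleR_left
          matrix_mul_scaleR_right scaleR_scaleR mult.commute)
  qed
  ultimately show ?thesis unfolding JM_def povm_def using L p
    by (intro exI[of _ L] exI[of _ G] exI[of _ p]) simp
qed

definition noisy :: "('a::finite \<Rightarrow> 'x \<Rightarrow> 'n::finite op) \<Rightarrow> real \<Rightarrow> 'a \<Rightarrow> 'x \<Rightarrow> 'n op" where
  "noisy B t a x = (1 / (1 + t)) *\<^sub>R (B a x + (t / real CARD('a)) *\<^sub>R mat 1)"

lemma MA_sum_outcomes: "MA B \<Longrightarrow> (\<Sum>a\<in>UNIV. B a x) = mat 1"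
  unfolding MA_def povm_def by blast

lemma noisy_sum_outcomes:
  fixes B :: "'a::finite \<Rightarrow> 'x::finite \<Rightarrow> 'n::finite op"
  assumes "MA B" "t \<ge> 0"
  shows "(\<Sum>a\<in>UNIV. noisy B t a x) = mat 1"
proof -
  have "real CARD('a) > 0" by simp
  then have "(\<Sum>a\<in>UNIV. B a x + (t / real CARD('a)) *\<^sub>R mat 1) = (1 + t) *\<^sub>R mat 1"
    using MA_sum_outcomes[OF assms(1)] by (simp add: sum.distrib sum_constant_scaleR scaleR_add_left del: sum_constant)
  then have "(\<Sum>a\<in>UNIV. noisy B t a x) = (1 / (1 + t)) *\<^sub>R ((1 + t) *\<^sub>R mat 1)"
    unfolding noisy_def by (simp only: scaleR_sum_right[symmetric])
  also have "\<dots> = mat 1" using assms(2) by simp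
  finally show ?thesis .
qed

lemma JM_of_finite_parent:
  fixes M :: "'a::finite \<Rightarrow> 'x::finite \<Rightarrow> 'n::finite op" and G :: "'l::finite \<Rightarrow> 'n op"
  assumes "povm G UNIV" "\<And>a x l. p a x l \<ge> 0" "\<And>x l. (\<Sum>a\<in>UNIV. p a x l) = 1"
    and M: "\<And>a x. M a x = (\<Sum>l\<in>UNIV. p a x l *\<^sub>R G l)"
  shows "JM M"
proof -
  obtain h :: "nat \<Rightarrow> 'l" where h: "bij_betw h {0..<CARD('l)} UNIV"
    using ex_bij_betw_nat_finite[of "UNIV :: 'l set"] by auto
  have reindex: "(\<Sum>n\<in>{0..<CARD('l)}. f (h n)) = (\<Sum>l\<in>UNIV. f l)" for f :: "'l \<Rightarrow> 'n op"
    by (rule sum.reindex_bij_betw[OF h])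
  have "(\<Sum>n\<in>{0..<CARD('l)}. G (h n)) = mat 1"
    using reindex[of G] assms(1) unfolding povm_def by simp
  moreover have "M a x = (\<Sum>n\<in>{0..<CARD('l)}. p a x (h n) *\<^sub>R G (h n))" for a x
    using reindex[of "\<lambda>l. p a x l *\<^sub>R G l"] M by simp
  moreover have "\<forall>n\<in>{0..<CARD('l)}. psd (G (h n))" using assms(1) unfolding povm_def by blast
  ultimately show ?thesis unfolding JM_def povm_def using assms(2,3)
    by (intro exI[of _ "{0..<CARD('l)}"] exI[of _ "\<lambda>n. G (h n)"] exI[of _ "\<lambda>a x n. p a x (h n)"]) simp
qed

lemma sum_UNIV_pairs: "(\<Sum>yb\<in>UNIV. f yb) = (\<Sum>y\<in>UNIV. \<Sum>b\<in>UNIV. f (y, b))"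
  by (simp add: sum.cartesian_product flip: UNIV_Times_UNIV)

lemma povm_uniform_mixture:
  fixes B :: "'a::finite \<Rightarrow> 'x::finite \<Rightarrow> 'n::finite op"
  assumes "MA B"
  shows "povm (\<lambda>yb. (1 / real CARD('x)) *\<^sub>R B (snd yb) (fst yb)) UNIV"
  unfolding povm_def
proof
  show "\<forall>yb\<in>UNIV. psd ((1 / real CARD('x)) *\<^sub>R B (snd yb) (fst yb))"
    using assms unfolding MA_def povm_def by (simp add: psd_scaleR)
  have "(\<Sum>yb\<in>UNIV. (1 / real CARD('x)) *\<^sub>R B (snd yb) (fst yb))
      = (\<Sum>y\<in>(UNIV::'x set). (1 / real CARD('x)) *\<^sub>R mat 1)"
    by (simp add: sum_UNIV_pairs scaleR_sum_right[symmetric] MA_sum_outcomes[OF assms])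
  also have "\<dots> = mat 1" by (simp add: sum_constant_scaleR del: sum_constant)
  finally show "(\<Sum>yb\<in>UNIV. (1 / real CARD('x)) *\<^sub>R B (snd yb) (fst yb)) = mat 1" .
qed

text \<open>Parent measurement: pick an input \<open>y\<close> uniformly at random and measure \<open>B\<^sub>y\<close>; on input \<open>x\<close>,
  report the outcome if \<open>y = x\<close> and a uniformly random outcome otherwise.\<close>

lemma JM_noisy_card_inputs:
  fixes B :: "'a::finite \<Rightarrow> 'x::finite \<Rightarrow> 'n::finite op"
  assumes "MA B"
  shows "JM (noisy B (real CARD('x) - 1))"
proof -
  define m where "m = real CARD('x)"
  define k where "k = real CARD('a)"
  have k: "k > 0" unfolding k_def by simp
  define G :: "'x \<times> 'a \<Rightarrow> 'n op" where "G yb = (1/m) *\<^sub>R B (snd yb) (fst yb)" for yb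
  define p :: "'a \<Rightarrow> 'x \<Rightarrow> 'x \<times> 'a \<Rightarrow> real"
    where "p a x yb = (if fst yb = x then (if snd yb = a then 1 else 0) else 1/k)" for a x yb
  have povm: "povm G UNIV"
    unfolding G_def m_def by (rule povm_uniform_mixture[OF assms])
  have p_nonneg: "p a x yb \<ge> 0" for a x yb using k unfolding p_def by simp
  have p_sum: "(\<Sum>a\<in>UNIV. p a x yb) = 1" for x yb
    using k unfolding p_def k_def by (cases "fst yb = x") simp_all
  have decomposition: "noisy B (m - 1) a x = (\<Sum>yb\<in>UNIV. p a x yb *\<^sub>R G yb)" for a x
  proof -
    define F where "F y = (\<Sum>b\<in>UNIV. p a x (y, b) *\<^sub>R G (y, b))" for y
    have F_x: "F x = (1/m) *\<^sub>R B a x"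
      unfolding F_def p_def G_def by (simp add: if_distrib if_distribR cong: if_cong)
    have F_other: "F y = (1/(k*m)) *\<^sub>R mat 1" if "y \<noteq> x" for y
      using that MA_sum_outcomes[OF assms]
      unfolding F_def p_def G_def by (simp add: scaleR_sum_right[symmetric])
    have "(\<Sum>y\<in>UNIV - {x}. F y) = (\<Sum>y\<in>UNIV - {x}. (1/(k*m)) *\<^sub>R mat 1)"
      using F_other by (intro sum.cong) auto
    also have "\<dots> = ((m - 1) / (k*m)) *\<^sub>R mat 1"
      unfolding m_def
      by (simp add: sum_constant_scaleR card_Diff_singleton of_nat_diff Suc_leI del: sum_constant)
    finally have F_rest: "(\<Sum>y\<in>UNIV - {x}. F y) = ((m - 1) / (k*m)) *\<^sub>R mat 1" .
    have "(\<Sum>yb\<in>UNIV. p a x yb *\<^sub>R G yb) = (\<Sum>y\<in>UNIV. F y)"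
      unfolding F_def by (rule sum_UNIV_pairs)
    also have "\<dots> = F x + (\<Sum>y\<in>UNIV - {x}. F y)" by (simp add: sum.remove)
    also have "\<dots> = noisy B (m - 1) a x"
      unfolding F_x F_rest noisy_def m_def[symmetric] k_def[symmetric] by (simp add: scaleR_add_right)
    finally show ?thesis by simp
  qed
  have "JM (noisy B (m - 1))"
    by (rule JM_of_finite_parent[where G = G and p = p]) (rule povm p_nonneg p_sum decomposition)+
  then show ?thesis unfolding m_def .
qed

lemma reduced_state_eqI:
  assumes "\<And>x. (\<Sum>a\<in>UNIV. \<sigma> a x) = \<rho>"
  shows "reduced_state \<sigma> = \<rho>"
  unfolding reduced_state_def
proof (rule the_equality)
  show "\<forall>x. (\<Sum>a\<in>UNIV. \<sigma> a x) = \<rho>" using assms by blast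
  fix r assume "\<forall>x. (\<Sum>a\<in>UNIV. \<sigma> a x) = r"
  then have "(\<Sum>a\<in>UNIV. \<sigma> a undefined) = r" by blast
  then show "r = \<rho>" using assms by simp
qed

lemma op_sqrt_density:
  assumes "density_op \<rho>"
  shows "adj (op_sqrt \<rho>) = op_sqrt \<rho>" "op_sqrt \<rho> ** op_sqrt \<rho> = \<rho>"
  using op_sqrt assms psd_hermitian unfolding density_op_def hermitian_def by blast+

lemma invertible_op_sqrt:
  assumes "density_op \<rho>" "invertible \<rho>"
  shows "invertible (op_sqrt \<rho>)"
proof -
  obtain R where "\<rho> ** R = mat 1" using assms(2) unfolding invertible_def by blast
  then have "op_sqrt \<rho> ** (op_sqrt \<rho> ** R) = mat 1"
    using op_sqrt_density(2)[OF assms(1)] by (simp add: matrix_mul_assoc)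
  then show ?thesis using invertible_right_inverse by blast
qed

lemma SR_R_sandwich_eq_Inf:
  fixes B :: "'a::finite \<Rightarrow> 'x::finite \<Rightarrow> 'n::finite op"
  assumes "MA B" "density_op \<rho>"
  shows "SR_R (sandwich \<rho> B)
    = Inf {t. t \<ge> 0 \<and> LHS (\<lambda>a x. op_sqrt \<rho> ** noisy B t a x ** op_sqrt \<rho>)}"
proof -
  let ?S = "op_sqrt \<rho>"
  have "reduced_state (sandwich \<rho> B) = \<rho>"
  proof (rule reduced_state_eqI)
    fix x
    have "(\<Sum>a\<in>UNIV. sandwich \<rho> B a x) = ?S ** (\<Sum>a\<in>UNIV. B a x) ** ?S"
      unfolding sandwich_def by (simp only: matrix_mul_sum_left matrix_mul_sum_right)
    then show "(\<Sum>a\<in>UNIV. sandwich \<rho> B a x) = \<rho>"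
      using MA_sum_outcomes[OF assms(1)] op_sqrt_density(2)[OF assms(2)] by simp
  qed
  then have reduced: "reduced_state (sandwich \<rho> B) = ?S ** mat 1 ** ?S"
    using op_sqrt_density(2)[OF assms(2)] by simp
  have "(1 / (1 + t)) *\<^sub>R (sandwich \<rho> B a x + (t / real CARD('a)) *\<^sub>R reduced_state (sandwich \<rho> B))
      = ?S ** noisy B t a x ** ?S" for t a x
    unfolding reduced unfolding sandwich_def noisy_def
    by (simp only: matrix_mul_scaleR_left matrix_mul_scaleR_right matrix_add_ldistrib matrix_add_rdistrib)
  then show ?thesis unfolding SR_R_def by (simp add: fun_eq_iff[symmetric])
qed

lemma maximally_mixed_state:
  "density_op ((1 / real CARD('n)) *\<^sub>R mat 1 :: 'n::finite op)
    \<and> invertible ((1 / real CARD('n)) *\<^sub>R mat 1 :: 'n op)"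
proof
  have "psd ((1 / real CARD('n)) *\<^sub>R mat 1 :: 'n op)" by (rule psd_scaleR[OF psd_mat1]) simp
  then show "density_op ((1 / real CARD('n)) *\<^sub>R mat 1 :: 'n op)"
    unfolding density_op_def by (simp add: trace_scaleR trace_I)
  show "invertible ((1 / real CARD('n)) *\<^sub>R mat 1 :: 'n op)"
    by (rule scalar_invertible) (auto simp: invertible_def)
qed

lemma IR_R_eq_Inf: "IR_R B = Inf {t. t \<ge> 0 \<and> JM (noisy B t)}"
  unfolding IR_R_def noisy_def[symmetric] by (simp add: fun_eq_iff[symmetric])

theorem lemma2:
  fixes B :: "'a::finite \<Rightarrow> 'x::finite \<Rightarrow> 'n::finite op"
  assumes "MA B"
  shows "(\<forall>\<rho>. density_op \<rho> \<longrightarrow> SR_R (sandwich \<rho> B) \<le> IR_R B)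
       \<and> (\<exists>\<rho>. density_op \<rho> \<and> SR_R (sandwich \<rho> B) = IR_R B)
       \<and> (\<forall>\<rho>. density_op \<rho> \<and> invertible \<rho> \<longrightarrow> SR_R (sandwich \<rho> B) = IR_R B)"
proof -
  have JM_LHS: "{t. t \<ge> 0 \<and> JM (noisy B t)}
      \<subseteq> {t. t \<ge> 0 \<and> LHS (\<lambda>a x. op_sqrt \<rho> ** noisy B t a x ** op_sqrt \<rho>)}"
    if "density_op \<rho>" for \<rho>
    using JM_imp_LHS_sandwich[of "op_sqrt \<rho>"] op_sqrt_density[OF that] that by auto
  have LHS_JM: "{t. t \<ge> 0 \<and> LHS (\<lambda>a x. op_sqrt \<rho> ** noisy B t a x ** op_sqrt \<rho>)}
      \<subseteq> {t. t \<ge> 0 \<and> JM (noisy B t)}"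
    if "density_op \<rho>" "invertible \<rho>" for \<rho>
    using LHS_sandwich_imp_JM[OF invertible_op_sqrt[OF that]] noisy_sum_outcomes[OF assms]
      op_sqrt_density(1)[OF that(1)] by fastforce
  have "real CARD('x) \<ge> 1" by (simp add: Suc_leI)
  then have "real CARD('x) - 1 \<in> {t. t \<ge> 0 \<and> JM (noisy B t)}"
    using JM_noisy_card_inputs[OF assms] by simp
  then have "{t. t \<ge> 0 \<and> JM (noisy B t)} \<noteq> {}" by blast
  then have le: "SR_R (sandwich \<rho> B) \<le> IR_R B" if "density_op \<rho>" for \<rho>
    unfolding IR_R_eq_Inf SR_R_sandwich_eq_Inf[OF assms that]
    by (rule cInf_superset_mono[OF _ _ JM_LHS[OF that]]) (auto intro: bdd_belowI[of _ 0])
  have eq: "SR_R (sandwich \<rho> B) = IR_R B" if "density_op \<rho>" "invertible \<rho>" for \<rho>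
    unfolding IR_R_eq_Inf SR_R_sandwich_eq_Inf[OF assms that(1)]
    by (simp add: subset_antisym[OF JM_LHS[OF that(1)] LHS_JM[OF that]])
  show ?thesis using le eq maximally_mixed_state by blast
qed

end
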